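(* For all $\varepsilon'>0$ and $\delta>0$ there exists $\varepsilon=\varepsilon(\varepsilon',\delta)>0$ such that the following holds. Let $(V_1,V_2,V_3)$ be an $\varepsilon$-typical $(\varepsilon,p)$-regular triple in a graph in which every pair $(V_i,V_j)$ has density at least $\delta p$. Assume moreover that the endpoints of no edge between $V_2$ and $V_3$ have more than $4p^2|V_1|$ common neighbours in $V_1$. Then $V_1$ contains at most $\varepsilon'|V_1|$ vertices that are not $\varepsilon'$-good.
   Context: For disjoint $X,Y$, $d(X,Y)=e(X,Y)/(|X||Y|)$; $x=(1\pm a)y$ means $x\in[(1-a)y,(1+a)y]$. A pair $(X,Y)$ is $(\varepsilon,p)$-regular if $|d(X,Y)-d(X',Y')|\le\varepsilon p$ for all $X'\subset X,Y'\subset Y$ with $|X'|\ge\varepsilon|X|,|Y'|\ge\varepsilon|Y|$; a triple is $(\varepsilon,p)$-regular if all three pairs are. Write $d(V_i,V_j)=d_{ij}p$. For $\{i,j,k\}=\{1,2,3\}$, $v\in V_i$ is $\varepsilon$-typical if with $N_j=N(v)\cap V_j$, $N_k=N(v)\cap V_k$: $|N_j|=(1\pm\varepsilon)d_{ij}p|V_j|$, $|N_k|=(1\pm\varepsilon)d_{ik}p|V_k|$, and there exist $N_j'\subset N_j,N_k'\subset N_k$ with $|N_j'|\ge(1-\varepsilon)|N_j|,|N_k'|\ge(1-\varepsilon)|N_k|$ such that $(N_j',N_k')$ is $(\varepsilon,p)$-regular of density $(1\pm\varepsilon)d_{jk}p$. The triple is $\varepsilon$-typical if it is $(\varepsilon,p)$-regular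 and for each $i$ all but at most $\varepsilon|V_i|$ vertices of $V_i$ are $\varepsilon$-typical. An edge $uw$, $u\in V_j$, $w\in V_k$, is $\varepsilon'$-good if $u,w$ have at least $(1-\varepsilon')d_{ij}d_{ik}p^2|V_i|$ common neighbours in $V_i$. A vertex $v\in V_i$ is $\varepsilon'$-good if it is $\varepsilon'$-typical and at most $\varepsilon' d_{12}d_{13}d_{23}p^3|V_j||V_k|$ edges between $N(v)\cap V_j$ and $N(v)\cap V_k$ are not $\varepsilon'$-good. *)

theory Defs
  imports Main Complex_Main
begin

definition edges_between :: "(nat \<Rightarrow> nat \<Rightarrow> bool) \<Rightarrow> nat set \<Rightarrow> nat set \<Rightarrow> nat" where
  "edges_between E X Y = card {(x, y). x \<in> X \<and> y \<in> Y \<and> E x y}"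

definition dens :: "(nat \<Rightarrow> nat \<Rightarrow> bool) \<Rightarrow> nat set \<Rightarrow> nat set \<Rightarrow> real" where
  "dens E X Y = real (edges_between E X Y) / (real (card X) * real (card Y))"

text \<open>x = (1 +- a) y\<close>
definition approx_eq :: "real \<Rightarrow> real \<Rightarrow> real \<Rightarrow> bool" where
  "approx_eq x a y \<longleftrightarrow> (1 - a) * y \<le> x \<and> x \<le> (1 + a) * y"

definition regular_pair :: "(nat \<Rightarrow> nat \<Rightarrow> bool) \<Rightarrow> real \<Rightarrow> real \<Rightarrow> nat set \<Rightarrow> nat set \<Rightarrow> bool" where
  "regular_pair E eps p X Y \<longleftrightarrow>
     (\<forall>X' Y'. X' \<subseteq> X \<and> Y' \<subseteq> Y \<and> real (card X') \<ge> eps * real (card X)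
        \<and> real (card Y') \<ge> eps * real (card Y)
        \<longrightarrow> \<bar>dens E X Y - dens E X' Y'\<bar> \<le> eps * p)"

definition regular_triple :: "(nat \<Rightarrow> nat \<Rightarrow> bool) \<Rightarrow> real \<Rightarrow> real \<Rightarrow> nat set \<Rightarrow> nat set \<Rightarrow> nat set \<Rightarrow> bool" where
  "regular_triple E eps p V1 V2 V3 \<longleftrightarrow>
     regular_pair E eps p V1 V2 \<and> regular_pair E eps p V1 V3 \<and> regular_pair E eps p V2 V3"

definition dcoef :: "(nat \<Rightarrow> nat \<Rightarrow> bool) \<Rightarrow> real \<Rightarrow> nat set \<Rightarrow> nat set \<Rightarrow> real" where
  "dcoef E p X Y = dens E X Y / p"

definition nbhd :: "(nat \<Rightarrow> nat \<Rightarrow> bool) \<Rightarrow> nat \<Rightarrow> nat set \<Rightarrow> nat set" where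
  "nbhd E v X = {u \<in> X. E v u}"

definition typical_vertex :: "(nat \<Rightarrow> nat \<Rightarrow> bool) \<Rightarrow> real \<Rightarrow> real \<Rightarrow> nat set \<Rightarrow> nat set \<Rightarrow> nat set \<Rightarrow> nat \<Rightarrow> bool" where
  "typical_vertex E eps p Vi Vj Vk v \<longleftrightarrow>
     approx_eq (real (card (nbhd E v Vj))) eps (dcoef E p Vi Vj * p * real (card Vj)) \<and>
     approx_eq (real (card (nbhd E v Vk))) eps (dcoef E p Vi Vk * p * real (card Vk)) \<and>
     (\<exists>Nj' Nk'. Nj' \<subseteq> nbhd E v Vj \<and> Nk' \<subseteq> nbhd E v Vk \<and>
        real (card Nj') \<ge> (1 - eps) * real (card (nbhd E v Vj)) \<and>
        real (card Nk') \<ge> (1 - eps) * real (card (nbhd E v Vk)) \<and>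
        regular_pair E eps p Nj' Nk' \<and>
        approx_eq (dens E Nj' Nk') eps (dcoef E p Vj Vk * p))"

definition typical_triple :: "(nat \<Rightarrow> nat \<Rightarrow> bool) \<Rightarrow> real \<Rightarrow> real \<Rightarrow> nat set \<Rightarrow> nat set \<Rightarrow> nat set \<Rightarrow> bool" where
  "typical_triple E eps p V1 V2 V3 \<longleftrightarrow>
     regular_triple E eps p V1 V2 V3 \<and>
     real (card {v \<in> V1. \<not> typical_vertex E eps p V1 V2 V3 v}) \<le> eps * real (card V1) \<and>
     real (card {v \<in> V2. \<not> typical_vertex E eps p V2 V1 V3 v}) \<le> eps * real (card V2) \<and>
     real (card {v \<in> V3. \<not> typical_vertex E eps p V3 V1 V2 v}) \<le> eps * real (card V3)"

definition good_edge :: "(nat \<Rightarrow> nat \<Rightarrow> bool) \<Rightarrow> real \<Rightarrow> real \<Rightarrow> nat set \<Rightarrow> nat set \<Rightarrow> nat set \<Rightarrow> nat \<Rightarrow> nat \<Rightarrow> bool" where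
  "good_edge E eps' p Vi Vj Vk u w \<longleftrightarrow>
     real (card {v \<in> Vi. E u v \<and> E w v})
       \<ge> (1 - eps') * dcoef E p Vi Vj * dcoef E p Vi Vk * p ^ 2 * real (card Vi)"

definition good_vertex :: "(nat \<Rightarrow> nat \<Rightarrow> bool) \<Rightarrow> real \<Rightarrow> real \<Rightarrow> nat set \<Rightarrow> nat set \<Rightarrow> nat set \<Rightarrow> nat \<Rightarrow> bool" where
  "good_vertex E eps' p Vi Vj Vk v \<longleftrightarrow>
     typical_vertex E eps' p Vi Vj Vk v \<and>
     real (card {(u, w). u \<in> nbhd E v Vj \<and> w \<in> nbhd E v Vk \<and> E u w \<and>
                   \<not> good_edge E eps' p Vi Vj Vk u w})
       \<le> eps' * dcoef E p Vi Vj * dcoef E p Vi Vk * dcoef E p Vj Vk * p ^ 3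
            * real (card Vj) * real (card Vk)"

end

theory Submission
  imports Defs
begin

text \<open>Call an edge uw with u in V2, w in V3 bad if it is not eps'-good. If u is typical, its
  neighbourhoods in V1 and V3 contain a regular pair, so all but an eps-fraction of the neighbours
  w of u in V3 have about the expected number of neighbours in N(u) \<inter> V1, i.e. uw is good.
  The few atypical u lie in few edges by regularity of (V2, V3). Hence there are only
  O(eps d23 |V2| |V3|) bad edges. As every edge has at most 4 p^2 |V1| common neighbours in V1,
  double counting bounds the number of pairs (v, bad edge inside N(v)) by
  O(eps p^2 d23 |V1| |V2| |V3|), and by Markov's inequality only O(eps / (eps' \<delta>^2)) |V1|
  vertices v see more bad edges than a good vertex may. Choosing eps small in terms of eps' and
  \<delta> makes these vertices together with the atypical ones at most eps' |V1|.\<close>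

lemma card_pairs_eq_sum_fst:
  assumes "finite X" "finite Y"
  shows "card {(x, y). x \<in> X \<and> y \<in> Y \<and> P x y} = (\<Sum>x\<in>X. card {y \<in> Y. P x y})"
proof -
  have "{(x, y). x \<in> X \<and> y \<in> Y \<and> P x y} = Sigma X (\<lambda>x. {y \<in> Y. P x y})" by auto
  then show ?thesis using assms by (simp add: card_SigmaI)
qed

lemma card_pairs_swap:
  "card {(x, y). x \<in> X \<and> y \<in> Y \<and> P x y} = card {(y, x). y \<in> Y \<and> x \<in> X \<and> P x y}"
proof -
  have "{(x, y). x \<in> X \<and> y \<in> Y \<and> P x y} = prod.swap ` {(y, x). y \<in> Y \<and> x \<in> X \<and> P x y}"
    by auto
  then show ?thesis by (simp add: card_image)
qed

lemma card_pairs_eq_sum_snd: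
  assumes "finite X" "finite Y"
  shows "card {(x, y). x \<in> X \<and> y \<in> Y \<and> P x y} = (\<Sum>y\<in>Y. card {x \<in> X. P x y})"
  using card_pairs_swap[of X Y P] card_pairs_eq_sum_fst[OF assms(2,1)] by simp

lemma sum_card_swap:
  assumes "finite A" "finite B"
  shows "(\<Sum>a\<in>A. card {b \<in> B. P a b}) = (\<Sum>b\<in>B. card {a \<in> A. P a b})"
  using card_pairs_eq_sum_fst[OF assms, of P] card_pairs_eq_sum_snd[OF assms, of P] by simp

lemma card_above_threshold_mult_le_sum:
  fixes f :: "'a \<Rightarrow> real"
  assumes "finite A" "\<And>x. x \<in> A \<Longrightarrow> 0 \<le> f x"
  shows "real (card {x \<in> A. M < f x}) * M \<le> (\<Sum>x\<in>A. f x)"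
proof -
  have "real (card {x \<in> A. M < f x}) * M = (\<Sum>x\<in>{x \<in> A. M < f x}. M)" by simp
  also have "\<dots> \<le> (\<Sum>x\<in>{x \<in> A. M < f x}. f x)" by (rule sum_mono) auto
  also have "\<dots> \<le> (\<Sum>x\<in>A. f x)" by (rule sum_mono2) (use assms in auto)
  finally show ?thesis .
qed

lemma edges_between_commute:
  assumes "\<forall>x y. E x y \<longleftrightarrow> E y x"
  shows "edges_between E X Y = edges_between E Y X"
  unfolding edges_between_def using card_pairs_swap[of X Y E] assms by simp

lemma dens_commute:
  assumes "\<forall>x y. E x y \<longleftrightarrow> E y x"
  shows "dens E X Y = dens E Y X"
  unfolding dens_def using edges_between_commute[OF assms, of X Y] by (simp add: mult.commute)

lemma dens_nonneg: "0 \<le> dens E X Y"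
  unfolding dens_def by simp

lemma dcoef_mult_p: "0 < p \<Longrightarrow> dcoef E p X Y * p = dens E X Y"
  unfolding dcoef_def by simp

lemma edges_between_eq_dens:
  assumes "card X > 0" "card Y > 0"
  shows "real (edges_between E X Y) = dens E X Y * card X * card Y"
  using assms unfolding dens_def by simp

lemma edges_between_mono:
  assumes "A \<subseteq> B" "finite B" "finite Y"
  shows "edges_between E A Y \<le> edges_between E B Y"
  unfolding edges_between_def
  by (rule card_mono) (use assms in \<open>auto intro: finite_subset[of _ "B \<times> Y"]\<close>)

lemma approx_eq_mono: "approx_eq x a y \<Longrightarrow> a \<le> b \<Longrightarrow> 0 \<le> y \<Longrightarrow> approx_eq x b y"
  unfolding approx_eq_def by (smt (verit) mult_right_mono)

lemma regular_pair_mono: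
  assumes reg: "regular_pair E a p X Y" and ab: "a \<le> b" and p: "0 \<le> p"
  shows "regular_pair E b p X Y"
  unfolding regular_pair_def
proof (intro allI impI)
  fix X' Y'
  assume "X' \<subseteq> X \<and> Y' \<subseteq> Y \<and> b * real (card X) \<le> real (card X')
    \<and> b * real (card Y) \<le> real (card Y')"
  moreover have "a * real (card X) \<le> b * real (card X)" "a * real (card Y) \<le> b * real (card Y)"
    using ab by (auto intro: mult_right_mono)
  ultimately have "\<bar>dens E X Y - dens E X' Y'\<bar> \<le> a * p"
    using reg unfolding regular_pair_def by force
  also have "\<dots> \<le> b * p" using ab p by (rule mult_right_mono)
  finally show "\<bar>dens E X Y - dens E X' Y'\<bar> \<le> b * p" .
qed

lemma typical_vertex_mono:
  assumes typical: "typical_vertex E a p Vi Vj Vk v" and ab: "a \<le> b" and p: "0 < p"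
  shows "typical_vertex E b p Vi Vj Vk v"
proof -
  have nonneg: "0 \<le> dcoef E p X Y * p * real c" "0 \<le> dcoef E p X Y * p" for X Y c
    using dcoef_mult_p[OF p] dens_nonneg by auto
  obtain Nj' Nk' where N': "Nj' \<subseteq> nbhd E v Vj" "Nk' \<subseteq> nbhd E v Vk"
      "(1 - a) * real (card (nbhd E v Vj)) \<le> real (card Nj')"
      "(1 - a) * real (card (nbhd E v Vk)) \<le> real (card Nk')"
      "regular_pair E a p Nj' Nk'" "approx_eq (dens E Nj' Nk') a (dcoef E p Vj Vk * p)"
    using typical unfolding typical_vertex_def by blast
  have "(1 - b) * real (card (nbhd E v Vj)) \<le> (1 - a) * real (card (nbhd E v Vj))"
       "(1 - b) * real (card (nbhd E v Vk)) \<le> (1 - a) * real (card (nbhd E v Vk))"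
    using ab by (auto intro: mult_right_mono)
  then show ?thesis
    using typical N' ab p nonneg approx_eq_mono regular_pair_mono[OF N'(5) ab]
    unfolding typical_vertex_def by (smt (verit))
qed

lemma regular_pair_few_low_degree:
  assumes reg: "regular_pair E eps p X Y" and fin: "finite X" "finite Y"
    and eps: "0 \<le> eps" "eps \<le> 1" and d: "d \<le> dens E X Y"
  shows "real (card {y \<in> Y. real (card {x \<in> X. E x y}) < (d - eps * p) * card X})
           \<le> eps * card Y"
proof -
  define W where "W = {y \<in> Y. real (card {x \<in> X. E x y}) < (d - eps * p) * card X}"
  have finW: "finite W" unfolding W_def using fin by simp
  have "real (card W) \<le> eps * card Y"
  proof (rule ccontr)
    assume "\<not> ?thesis"
    then have large: "eps * card Y < card W" by simp
    then have W0: "card W > 0"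
      using eps by (smt (verit) mult_nonneg_nonneg of_nat_0_le_iff of_nat_0_less_iff)
    then obtain y0 where "y0 \<in> W" by (metis card.empty all_not_in_conv less_irrefl)
    then have X0: "card X > 0" unfolding W_def by (cases "card X = 0") auto
    have "eps * card X \<le> card X" using eps by (simp add: mult_left_le_one_le)
    \<comment> \<open>regularity applied to the pair (X, W) itself\<close>
    then have "\<bar>dens E X Y - dens E X W\<bar> \<le> eps * p"
      using reg large unfolding regular_pair_def W_def by auto
    then have dense: "d - eps * p \<le> dens E X W" using d by linarith
    have "real (edges_between E X W) = (\<Sum>y\<in>W. real (card {x \<in> X. E x y}))"
      unfolding edges_between_def using card_pairs_eq_sum_snd[OF fin(1) finW, of E] by simp
    also have "\<dots> < (\<Sum>y\<in>W. (d - eps * p) * card X)"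
      using W0 by (intro sum_strict_mono finW) (auto simp: W_def card_gt_0_iff)
    also have "\<dots> = (d - eps * p) * card X * card W" by simp
    finally have "dens E X W < d - eps * p"
      using X0 W0 unfolding dens_def by (simp add: field_simps)
    then show False using dense by simp
  qed
  then show ?thesis unfolding W_def .
qed

lemma regular_pair_edges_from_small_set:
  assumes reg: "regular_pair E eps p X Y" and fin: "finite X" "finite Y" and AX: "A \<subseteq> X"
    and cA: "real (card A) \<le> eps * card X" and eps: "0 < eps" "eps \<le> 1" and p: "0 \<le> p"
  shows "real (edges_between E A Y) \<le> (dens E X Y + eps * p) * (2 * eps * card X) * card Y"
proof (cases "A = {} \<or> Y = {}")
  case True
  then have "edges_between E A Y = 0" unfolding edges_between_def by auto
  then show ?thesis using dens_nonneg[of E X Y] eps p by simp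
next
  case False
  then have A0: "A \<noteq> {}" and Y0: "card Y > 0" using fin by auto
  have "1 \<le> card A" using A0 AX fin by (simp add: Suc_le_eq card_gt_0_iff finite_subset)
  then have ge1: "1 \<le> eps * card X" using cA by linarith
  \<comment> \<open>enlarge A to a set of size about eps |X|, to which regularity applies\<close>
  define k where "k = nat \<lceil>eps * card X\<rceil>"
  have k: "eps * card X \<le> real k" "real k \<le> 2 * eps * card X"
    unfolding k_def using ge1 by linarith+
  have "k \<le> card X"
    unfolding k_def using eps by (simp add: nat_le_iff ceiling_le_iff mult_left_le_one_le)
  moreover have "card A \<le> k" using cA k by linarith
  ultimately obtain A' where A': "A \<subseteq> A'" "A' \<subseteq> X" "card A' = k"
    using exists_subset_between AX fin(1) by blast
  have "\<bar>dens E X Y - dens E A' Y\<bar> \<le> eps * p"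
    using reg A' k eps unfolding regular_pair_def
    by (smt (verit, del_insts) mult_left_le_one_le of_nat_0_le_iff order_refl)
  then have dA': "dens E A' Y \<le> dens E X Y + eps * p" by linarith
  have "real (edges_between E A Y) \<le> real (edges_between E A' Y)"
    using edges_between_mono[OF A'(1)] A'(2) fin finite_subset of_nat_mono by metis
  also have "\<dots> = dens E A' Y * k * card Y"
    using edges_between_eq_dens[of A' Y E] A' k ge1 Y0 by simp
  also have "\<dots> \<le> (dens E X Y + eps * p) * (2 * eps * card X) * card Y"
    using dA' k dens_nonneg[of E A' Y] by (intro mult_right_mono mult_mono) auto
  finally show ?thesis .
qed

lemma good_edge_if_one_le:
  assumes "1 \<le> eps'" "0 < p"
  shows "good_edge E eps' p Vi Vj Vk u w"
proof -
  have "0 \<le> dcoef E p Vi Vj * dcoef E p Vi Vk * p ^ 2 * real (card Vi)"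
    using assms(2) dens_nonneg unfolding dcoef_def by simp
  with assms(1) have "(1 - eps') * (dcoef E p Vi Vj * dcoef E p Vi Vk * p ^ 2 * real (card Vi)) \<le> 0"
    by (simp add: mult_nonpos_nonneg)
  then show ?thesis unfolding good_edge_def by (simp add: mult.assoc order_trans)
qed

lemma common_neighbours_lower_bound_arith:
  fixes eps eps' \<delta> p e12 e13 n m :: real
  assumes eps: "0 \<le> eps" and \<delta>: "0 < \<delta>" "0 \<le> p" "\<delta> * p \<le> e13"
    and nonneg: "0 \<le> e12" "0 \<le> n" and m: "(1 - eps)\<^sup>2 * e12 * n \<le> m"
    and eps': "3 * eps + eps / \<delta> \<le> eps'" "eps' < 1"
  shows "(1 - eps') * e12 * e13 * n \<le> ((1 - eps) * e13 - eps * p) * m"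
proof -
  define c where "c = 1 - eps - eps / \<delta>"
  have "eps * p = eps / \<delta> * (\<delta> * p)" using \<delta> by simp
  also have "\<dots> \<le> eps / \<delta> * e13" using \<delta> eps by (intro mult_left_mono) auto
  finally have ce13: "c * e13 \<le> (1 - eps) * e13 - eps * p" unfolding c_def by argo
  have "0 \<le> eps / \<delta>" using eps \<delta> by simp
  then have c: "0 \<le> c" "c \<le> 1" unfolding c_def using eps eps' by auto
  have "1 - eps' \<le> c - 2 * eps" unfolding c_def using eps' by simp
  also have "\<dots> \<le> c * (1 - 2 * eps)" using c eps by (simp add: algebra_simps mult_left_le_one_le)
  also have "\<dots> \<le> c * (1 - eps)\<^sup>2"
    using c by (intro mult_left_mono) (auto simp: power2_eq_square algebra_simps)
  finally have factor: "1 - eps' \<le> c * (1 - eps)\<^sup>2" .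
  have "0 \<le> e13" using \<delta> mult_nonneg_nonneg[of \<delta> p] by linarith
  then have "0 \<le> e12 * e13 * n" using nonneg by simp
  with factor have "(1 - eps') * e12 * e13 * n \<le> c * (1 - eps)\<^sup>2 * (e12 * e13 * n)"
    using mult_right_mono by (metis mult.assoc)
  also have "\<dots> = (c * e13) * ((1 - eps)\<^sup>2 * e12 * n)" by (simp add: algebra_simps)
  also have "\<dots> \<le> ((1 - eps) * e13 - eps * p) * m"
    using ce13 m \<open>0 \<le> e13\<close> c nonneg
    by (intro mult_mono)
      (auto intro: order_trans[OF mult_nonneg_nonneg ce13] simp del: diff_ge_0_iff_ge)
  finally show ?thesis .
qed

lemma typical_vertex_few_bad_edges:
  assumes sym: "\<forall>x y. E x y \<longleftrightarrow> E y x" and fin: "finite V1" "finite V3"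
    and typical: "typical_vertex E eps p V2 V1 V3 u"
    and p: "0 < p" and eps: "0 \<le> eps" "eps \<le> 1"
    and \<delta>: "0 < \<delta>" "\<delta> * p \<le> dens E V1 V3" and eps': "3 * eps + eps / \<delta> \<le> eps'"
  shows "real (card {w \<in> V3. E u w \<and> \<not> good_edge E eps' p V1 V2 V3 u w})
           \<le> 2 * eps * card (nbhd E u V3)"
proof -
  define N1 N3 where "N1 = nbhd E u V1" and "N3 = nbhd E u V3"
  define d12 d13 where "d12 = dens E V1 V2" and "d13 = dens E V1 V3"
  obtain N1' N3' where N': "N1' \<subseteq> N1" "N3' \<subseteq> N3"
      "(1 - eps) * real (card N1) \<le> real (card N1')"
      "(1 - eps) * real (card N3) \<le> real (card N3')"
      "regular_pair E eps p N1' N3'" "approx_eq (dens E N1' N3') eps d13"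
    and N1: "approx_eq (real (card N1)) eps (d12 * card V1)"
    using typical dens_commute[OF sym, of V2 V1]
    unfolding typical_vertex_def N1_def N3_def d12_def d13_def dcoef_mult_p[OF p] by auto
  have finN: "finite N1" "finite N3" unfolding N1_def N3_def nbhd_def using fin by auto
  then have finN': "finite N1'" "finite N3'" using N' finite_subset by auto
  define \<theta> where "\<theta> = (1 - eps) * d13 - eps * p"
  define W where "W = {w \<in> N3'. real (card {x \<in> N1'. E x w}) < \<theta> * card N1'}"
  have cW: "real (card W) \<le> eps * card N3'"
    unfolding W_def \<theta>_def
    by (rule regular_pair_few_low_degree[OF N'(5) finN' eps])
      (use N'(6) in \<open>simp add: approx_eq_def\<close>)
  \<comment> \<open>since N1' \<subseteq> N(u), neighbours of w in N1' are common neighbours of u and w\<close>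
  have good: "good_edge E eps' p V1 V2 V3 u w" if w: "w \<in> N3' - W" for w
  proof (cases "1 \<le> eps'")
    case True
    then show ?thesis using p by (rule good_edge_if_one_le)
  next
    case False
    have "(1 - eps)\<^sup>2 * d12 * card V1 = (1 - eps) * ((1 - eps) * d12 * card V1)"
      by (simp add: power2_eq_square)
    also have "\<dots> \<le> (1 - eps) * card N1"
      using N1 eps by (intro mult_left_mono) (auto simp: approx_eq_def)
    also have "\<dots> \<le> card N1'" by (rule N'(3))
    finally have "(1 - eps') * d12 * d13 * card V1 \<le> \<theta> * card N1'"
      unfolding \<theta>_def using False eps' eps \<delta> p dens_nonneg
      by (intro common_neighbours_lower_bound_arith) (auto simp: d12_def d13_def)
    also have "\<dots> \<le> card {x \<in> N1'. E x w}" using w unfolding W_def by auto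
    also have "\<dots> \<le> card {v \<in> V1. E u v \<and> E w v}"
      using N'(1) sym fin unfolding N1_def nbhd_def by (intro of_nat_mono card_mono) auto
    finally show ?thesis
      unfolding good_edge_def d12_def d13_def dcoef_def using p by (simp add: power2_eq_square)
  qed
  have "{w \<in> V3. E u w \<and> \<not> good_edge E eps' p V1 V2 V3 u w} \<subseteq> (N3 - N3') \<union> W"
    using good unfolding N3_def nbhd_def by auto
  then have "card {w \<in> V3. E u w \<and> \<not> good_edge E eps' p V1 V2 V3 u w}
              \<le> card ((N3 - N3') \<union> W)"
    by (rule card_mono[rotated]) (simp add: W_def finN finN')
  also have "\<dots> \<le> card (N3 - N3') + card W" by (rule card_Un_le)
  finally have "card {w \<in> V3. E u w \<and> \<not> good_edge E eps' p V1 V2 V3 u w}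
                  \<le> card (N3 - N3') + card W" .
  moreover have "real (card (N3 - N3')) = real (card N3) - real (card N3')"
    using card_Diff_subset[OF finN'(2) N'(2)] card_mono[OF finN(2) N'(2)] by simp
  moreover have "eps * card N3' \<le> eps * card N3"
    using card_mono[OF finN(2) N'(2)] eps by (intro mult_left_mono) simp_all
  ultimately show ?thesis using cW N'(4) unfolding N3_def by (simp add: algebra_simps)
qed

definition bad_edges ::
    "(nat \<Rightarrow> nat \<Rightarrow> bool) \<Rightarrow> real \<Rightarrow> real \<Rightarrow> nat set \<Rightarrow> nat set \<Rightarrow> nat set \<Rightarrow> (nat \<times> nat) set"
  where
  "bad_edges E eps' p V1 V2 V3 =
     {(u, w). u \<in> V2 \<and> w \<in> V3 \<and> E u w \<and> \<not> good_edge E eps' p V1 V2 V3 u w}"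

lemma card_bad_edges_le:
  assumes sym: "\<forall>x y. E x y \<longleftrightarrow> E y x" and fin: "finite V1" "finite V2" "finite V3"
    and p: "0 < p" and eps: "0 < eps" "eps \<le> 1" "eps \<le> \<delta>"
    and \<delta>: "0 < \<delta>" "\<delta> * p \<le> dens E V1 V3" "\<delta> * p \<le> dens E V2 V3"
    and reg: "regular_pair E eps p V2 V3"
    and atypical: "real (card {u \<in> V2. \<not> typical_vertex E eps p V2 V1 V3 u}) \<le> eps * card V2"
    and eps': "3 * eps + eps / \<delta> \<le> eps'"
  shows "real (card (bad_edges E eps' p V1 V2 V3)) \<le> 8 * eps * dens E V2 V3 * card V2 * card V3"
proof -
  define d23 n2 n3 where "d23 = dens E V2 V3" and "n2 = real (card V2)" and "n3 = real (card V3)"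
  define A where "A = {u \<in> V2. \<not> typical_vertex E eps p V2 V1 V3 u}"
  define bad where "bad u = {w \<in> V3. E u w \<and> \<not> good_edge E eps' p V1 V2 V3 u w}" for u
  have A: "finite A" "A \<subseteq> V2" unfolding A_def using fin by auto
  have "eps * p \<le> \<delta> * p" using eps p by simp
  then have epsp: "eps * p \<le> d23" using \<delta> unfolding d23_def by linarith
  have "real (\<Sum>u\<in>A. card (bad u)) \<le> real (\<Sum>u\<in>A. card {w \<in> V3. E u w})"
    unfolding bad_def using fin by (intro of_nat_mono sum_mono card_mono) auto
  also have "\<dots> = real (edges_between E A V3)"
    unfolding edges_between_def using card_pairs_eq_sum_fst[OF A(1) fin(3), of E] by simp
  also have "\<dots> \<le> (d23 + eps * p) * (2 * eps * n2) * n3"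
    unfolding d23_def n2_def n3_def using atypical p unfolding A_def
    by (intro regular_pair_edges_from_small_set[OF reg fin(2,3)] eps) auto
  also have "\<dots> \<le> (2 * d23) * (2 * eps * n2) * n3"
    using epsp eps unfolding n2_def n3_def by (intro mult_right_mono) auto
  also have "\<dots> = 4 * eps * d23 * n2 * n3" by simp
  finally have sum_atypical: "real (\<Sum>u\<in>A. card (bad u)) \<le> 4 * eps * d23 * n2 * n3" .
  have bad_typical: "real (card (bad u)) \<le> 4 * eps * d23 * n3" if u: "u \<in> V2 - A" for u
  proof -
    have typical: "typical_vertex E eps p V2 V1 V3 u" using u unfolding A_def by auto
    have "real (card (bad u)) \<le> 2 * eps * card (nbhd E u V3)"
      unfolding bad_def using eps eps' \<delta>
      by (intro typical_vertex_few_bad_edges[OF sym fin(1,3) typical p]) auto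
    also have "\<dots> \<le> 2 * eps * ((1 + eps) * d23 * n3)"
      using typical eps
      unfolding typical_vertex_def approx_eq_def dcoef_mult_p[OF p] d23_def n3_def
      by (intro mult_left_mono) auto
    also have "\<dots> \<le> 2 * eps * (2 * d23 * n3)"
      using eps dens_nonneg[of E V2 V3] unfolding d23_def n3_def
      by (intro mult_left_mono mult_right_mono) auto
    also have "\<dots> = 4 * eps * d23 * n3" by simp
    finally show ?thesis .
  qed
  have "real (\<Sum>u\<in>V2 - A. card (bad u)) \<le> (\<Sum>u\<in>V2 - A. 4 * eps * d23 * n3)"
    unfolding of_nat_sum using bad_typical by (rule sum_mono)
  also have "\<dots> \<le> n2 * (4 * eps * d23 * n3)"
    using eps dens_nonneg[of E V2 V3] card_mono[OF fin(2), of "V2 - A"]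
    unfolding d23_def n2_def n3_def by (simp add: mult_right_mono)
  finally have sum_typical: "real (\<Sum>u\<in>V2 - A. card (bad u)) \<le> 4 * eps * d23 * n2 * n3"
    by (simp add: algebra_simps)
  have "card (bad_edges E eps' p V1 V2 V3) = (\<Sum>u\<in>V2. card (bad u))"
    unfolding bad_edges_def bad_def by (rule card_pairs_eq_sum_fst[OF fin(2,3)])
  also have "\<dots> = (\<Sum>u\<in>A. card (bad u)) + (\<Sum>u\<in>V2 - A. card (bad u))"
    using sum.subset_diff[OF A(2) fin(2)] by (simp add: add.commute)
  finally show ?thesis using sum_atypical sum_typical unfolding d23_def n2_def n3_def by simp
qed

lemma card_vertices_in_many_bad_edges_le:
  assumes sym: "\<forall>x y. E x y \<longleftrightarrow> E y x" and fin: "finite V1" "finite V2" "finite V3"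
    and p: "0 < p" and eps': "0 < eps'" and \<delta>: "0 < \<delta>"
    and dens: "\<delta> * p \<le> dens E V1 V2" "\<delta> * p \<le> dens E V1 V3" "\<delta> * p \<le> dens E V2 V3"
    and codegree: "\<forall>u\<in>V2. \<forall>w\<in>V3. E u w \<longrightarrow>
                     real (card {v \<in> V1. E u v \<and> E w v}) \<le> 4 * p ^ 2 * real (card V1)"
    and bad: "real (card (bad_edges E eps' p V1 V2 V3)) \<le> \<beta> * dens E V2 V3 * card V2 * card V3"
  shows "real (card {v \<in> V1. eps' * dens E V1 V2 * dens E V1 V3 * dens E V2 V3 * card V2 * card V3
            < real (card {q \<in> bad_edges E eps' p V1 V2 V3. E v (fst q) \<and> E v (snd q)})})
         \<le> 4 * \<beta> * card V1 / (eps' * \<delta>\<^sup>2)"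
proof -
  define Bad where "Bad = bad_edges E eps' p V1 V2 V3"
  define d12 d13 d23 where "d12 = dens E V1 V2" and "d13 = dens E V1 V3" and "d23 = dens E V2 V3"
  define S where "S = {v \<in> V1. eps' * d12 * d13 * d23 * card V2 * card V3
                        < real (card {q \<in> Bad. E v (fst q) \<and> E v (snd q)})}"
  have finBad: "finite Bad"
    unfolding Bad_def bad_edges_def by (rule finite_subset[of _ "V2 \<times> V3"]) (use fin in auto)
  have "real (card S) * (eps' * d12 * d13 * d23 * card V2 * card V3)
          \<le> (\<Sum>v\<in>V1. real (card {q \<in> Bad. E v (fst q) \<and> E v (snd q)}))"
    unfolding S_def using fin by (intro card_above_threshold_mult_le_sum) auto
  also have "\<dots> = (\<Sum>q\<in>Bad. real (card {v \<in> V1. E v (fst q) \<and> E v (snd q)}))"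
    unfolding of_nat_sum[symmetric] by (simp only: sum_card_swap[OF fin(1) finBad])
  also have "\<dots> \<le> (\<Sum>q\<in>Bad. 4 * p ^ 2 * card V1)"
  proof (rule sum_mono)
    fix q assume "q \<in> Bad"
    then obtain u w where q: "q = (u, w)" "u \<in> V2" "w \<in> V3" "E u w"
      unfolding Bad_def bad_edges_def by auto
    then have "{v \<in> V1. E v (fst q) \<and> E v (snd q)} = {v \<in> V1. E u v \<and> E w v}" using sym by auto
    then show "real (card {v \<in> V1. E v (fst q) \<and> E v (snd q)}) \<le> 4 * p ^ 2 * card V1"
      using codegree q by simp
  qed
  also have "\<dots> \<le> \<beta> * d23 * card V2 * card V3 * (4 * p ^ 2 * card V1)"
    using bad unfolding Bad_def d23_def by (simp add: mult_right_mono)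
  finally have "real (card S) * (eps' * d12 * d13) * (d23 * card V2 * card V3)
                  \<le> (4 * \<beta> * p ^ 2 * card V1) * (d23 * card V2 * card V3)"
    by (simp add: algebra_simps)
  moreover have "0 < d23 * card V2 * card V3"
  proof -
    have "0 < d23" using dens p \<delta> unfolding d23_def by (smt (verit) mult_pos_pos)
    then have "card V2 \<noteq> 0" "card V3 \<noteq> 0" unfolding d23_def dens_def by (auto intro: ccontr)
    then show ?thesis using \<open>0 < d23\<close> by simp
  qed
  ultimately have "real (card S) * (eps' * d12 * d13) \<le> 4 * \<beta> * p ^ 2 * card V1"
    by (rule mult_right_le_imp_le)
  moreover have "(\<delta> * p) * (\<delta> * p) \<le> d12 * d13"
    using dens \<delta> p dens_nonneg unfolding d12_def d13_def by (intro mult_mono) auto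
  then have "eps' * (\<delta> * p) ^ 2 \<le> eps' * d12 * d13"
    using eps' by (simp add: power2_eq_square mult.assoc)
  ultimately have "real (card S) * (eps' * \<delta>\<^sup>2) * p ^ 2 \<le> 4 * \<beta> * card V1 * p ^ 2"
    by (smt (verit) mult_left_mono of_nat_0_le_iff power_mult_distrib mult.commute
        mult.left_commute)
  then have "real (card S) * (eps' * \<delta>\<^sup>2) \<le> 4 * \<beta> * card V1" using p by simp
  then show ?thesis
    unfolding S_def Bad_def d12_def d13_def d23_def using eps' \<delta> by (simp add: pos_le_divide_eq)
qed

lemma card_not_good_vertices_le:
  assumes sym: "\<forall>x y. E x y \<longleftrightarrow> E y x" and fin: "finite V1" "finite V2" "finite V3"
    and p: "0 < p" and typical: "typical_triple E eps p V1 V2 V3"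
    and dens: "\<delta> * p \<le> dens E V1 V2" "\<delta> * p \<le> dens E V1 V3" "\<delta> * p \<le> dens E V2 V3"
    and codegree: "\<forall>u\<in>V2. \<forall>w\<in>V3. E u w \<longrightarrow>
                     real (card {v \<in> V1. E u v \<and> E w v}) \<le> 4 * p ^ 2 * real (card V1)"
    and eps: "0 < eps" "eps \<le> 1" "eps \<le> \<delta>" and \<delta>: "0 < \<delta>" and eps'_pos: "0 < eps'"
    and eps': "3 * eps + eps / \<delta> \<le> eps'" "eps + 32 * eps / (eps' * \<delta>\<^sup>2) \<le> eps'"
  shows "real (card {v \<in> V1. \<not> good_vertex E eps' p V1 V2 V3 v}) \<le> eps' * real (card V1)"
proof -
  define T where "T = {v \<in> V1. \<not> typical_vertex E eps p V1 V2 V3 v}"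
  \<comment> \<open>as dcoef E p X Y * p = dens E X Y, this is the threshold of good_vertex\<close>
  define S where "S = {v \<in> V1. eps' * dens E V1 V2 * dens E V1 V3 * dens E V2 V3 * card V2 * card V3
      < real (card {q \<in> bad_edges E eps' p V1 V2 V3. E v (fst q) \<and> E v (snd q)})}"
  have bad: "real (card (bad_edges E eps' p V1 V2 V3))
              \<le> 8 * eps * dens E V2 V3 * card V2 * card V3"
    using typical eps \<delta> dens eps'
    unfolding typical_triple_def regular_triple_def
    by (intro card_bad_edges_le[OF sym fin p]) auto
  have S: "real (card S) \<le> 32 * eps * card V1 / (eps' * \<delta>\<^sup>2)"
    unfolding S_def
    using card_vertices_in_many_bad_edges_le[OF sym fin p eps'_pos \<delta> dens codegree bad] by simp
  have "0 \<le> eps / \<delta>" using eps \<delta> by simp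
  then have eps_le: "eps \<le> eps'" using eps eps' by linarith
  have "{v \<in> V1. \<not> good_vertex E eps' p V1 V2 V3 v} \<subseteq> T \<union> S"
  proof
    fix v assume v: "v \<in> {v \<in> V1. \<not> good_vertex E eps' p V1 V2 V3 v}"
    show "v \<in> T \<union> S"
    proof (cases "typical_vertex E eps p V1 V2 V3 v")
      case True
      from True eps_le p have "typical_vertex E eps' p V1 V2 V3 v"
        by (rule typical_vertex_mono)
      moreover have "{(u, w). u \<in> nbhd E v V2 \<and> w \<in> nbhd E v V3 \<and> E u w \<and>
                        \<not> good_edge E eps' p V1 V2 V3 u w}
                   = {q \<in> bad_edges E eps' p V1 V2 V3. E v (fst q) \<and> E v (snd q)}"
        unfolding bad_edges_def nbhd_def by auto
      ultimately show ?thesis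
        using v p unfolding good_vertex_def S_def dcoef_def by (auto simp: power3_eq_cube)
    qed (use v T_def in auto)
  qed
  then have "card {v \<in> V1. \<not> good_vertex E eps' p V1 V2 V3 v} \<le> card (T \<union> S)"
    by (rule card_mono[rotated]) (simp add: T_def S_def fin(1))
  also have "\<dots> \<le> card T + card S" by (rule card_Un_le)
  finally have "card {v \<in> V1. \<not> good_vertex E eps' p V1 V2 V3 v} \<le> card T + card S" .
  moreover have "real (card T) \<le> eps * card V1"
    using typical unfolding typical_triple_def T_def by simp
  moreover have "(eps + 32 * eps / (eps' * \<delta>\<^sup>2)) * card V1 \<le> eps' * card V1"
    using eps' by (intro mult_right_mono) auto
  ultimately show ?thesis using S by (simp add: algebra_simps add_divide_distrib)
qed

lemma epsilon_choice:
  fixes eps' \<delta> :: real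
  assumes "0 < eps'" "0 < \<delta>"
  obtains eps where "0 < eps" "eps \<le> 1" "eps \<le> \<delta>"
    "3 * eps + eps / \<delta> \<le> eps'" "eps + 32 * eps / (eps' * \<delta>\<^sup>2) \<le> eps'"
proof
  define a b where "a = min eps' 1" and "b = min \<delta> 1"
  have a: "0 < a" "a \<le> 1" "a \<le> eps'" and b: "0 < b" "b \<le> 1" "b \<le> \<delta>"
    unfolding a_def b_def using assms by auto
  define eps where "eps = a\<^sup>2 * b\<^sup>2 / 100"
  have "a\<^sup>2 * b\<^sup>2 \<le> a" "a\<^sup>2 * b\<^sup>2 \<le> b" "a\<^sup>2 * b \<le> a"
    using a b by (simp_all add: power2_eq_square mult_le_one mult_left_le_one_le mult_right_le_one_le)
  moreover have "eps / \<delta> \<le> eps / b" unfolding eps_def using a b by (intro divide_left_mono) auto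
  moreover have "eps / b = a\<^sup>2 * b / 100" unfolding eps_def using b by (simp add: power2_eq_square)
  ultimately have small: "eps \<le> a / 100" "eps \<le> b / 100" "eps / \<delta> \<le> a / 100"
    unfolding eps_def by auto
  show "0 < eps" unfolding eps_def using a b by simp
  show "eps \<le> 1" "eps \<le> \<delta>" "3 * eps + eps / \<delta> \<le> eps'" using small a b by linarith+
  have "a * b\<^sup>2 \<le> eps' * \<delta>\<^sup>2" using a b by (intro mult_mono power_mono) auto
  then have "32 * eps / (eps' * \<delta>\<^sup>2) \<le> 32 * eps / (a * b\<^sup>2)"
    unfolding eps_def using a b by (intro divide_left_mono) auto
  also have "\<dots> = 32 * a / 100" unfolding eps_def using a b by (simp add: power2_eq_square)
  finally show "eps + 32 * eps / (eps' * \<delta>\<^sup>2) \<le> eps'" using small a by linarith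
qed

theorem proposition2p13:
  "\<forall>eps'>0. \<forall>\<delta>>0. \<exists>eps>0. \<forall>(E :: nat \<Rightarrow> nat \<Rightarrow> bool) (p :: real) V1 V2 V3.
     (\<forall>x y. E x y \<longleftrightarrow> E y x) \<and> (\<forall>x. \<not> E x x) \<and>
     0 < p \<and> p \<le> 1 \<and>
     finite V1 \<and> finite V2 \<and> finite V3 \<and>
     V1 \<inter> V2 = {} \<and> V1 \<inter> V3 = {} \<and> V2 \<inter> V3 = {} \<and>
     typical_triple E eps p V1 V2 V3 \<and>
     dens E V1 V2 \<ge> \<delta> * p \<and> dens E V1 V3 \<ge> \<delta> * p \<and> dens E V2 V3 \<ge> \<delta> * p \<and>
     (\<forall>u\<in>V2. \<forall>w\<in>V3. E u w \<longrightarrow> real (card {v \<in> V1. E u v \<and> E w v}) \<le> 4 * p ^ 2 * real (card V1))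
     \<longrightarrow> real (card {v \<in> V1. \<not> good_vertex E eps' p V1 V2 V3 v}) \<le> eps' * real (card V1)"
  (is "\<forall>eps'>0. \<forall>\<delta>>0. \<exists>eps>0. ?claim eps' \<delta> eps")
proof (intro allI impI)
  fix eps' \<delta> :: real
  assume pos: "0 < eps'" "0 < \<delta>"
  then obtain eps where eps: "0 < eps" "eps \<le> 1" "eps \<le> \<delta>"
    "3 * eps + eps / \<delta> \<le> eps'" "eps + 32 * eps / (eps' * \<delta>\<^sup>2) \<le> eps'"
    by (rule epsilon_choice)
  have "?claim eps' \<delta> eps"
    using eps pos by (intro allI impI, elim conjE, intro card_not_good_vertices_le) assumption+
  with eps(1) show "\<exists>eps>0. ?claim eps' \<delta> eps" by blast
qed

end
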